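(* Let $Q\in\mathbb{R}^{n\times n}$ be symmetric positive definite, $\|x\|=\sqrt{x^TQx}$, $\|u\|_*=\sqrt{u^TQ^{-1}u}$. Let $f\colon\mathbb{R}^n\to\mathbb{R}$ be convex and differentiable with $\|\nabla f(x)-\nabla f(y)\|_*\le L\|x-y\|$ for all $x,y$, and assume $f$ has a minimizer $x_\star$, $f_\star=f(x_\star)$. Let $w\colon\mathbb{R}^n\to\mathbb{R}$ be differentiable and $1$-strongly convex with respect to $\|\cdot\|$, and $V_x(y)=w(y)-\langle\nabla w(x),y-x\rangle-w(x)$. Let $\{\alpha_k\}_{k=1}^\infty$ be positive with $\alpha_1=\frac2L$ and $0\le\alpha_{k+1}^2L-2\alpha_{k+1}\le\alpha_k^2L$ for $k=1,2,\dots$, and let $\tau_k=\frac{2}{\alpha_{k+1}L}$ for $k=1,2,\dots$. Given $x_0$, let $z_0=x_0$ and for $k=0,1,\dots$ \[ y_{k+1}=x_k-L^{-1}Q^{-1}\nabla f(x_k),\quad z_{k+1}=\operatorname*{argmin}_{y\in\mathbb{R}^n}\{V_{z_k}(y)+\langle\alpha_{k+1}\nabla f(x_k),y-x_k\rangle\},\quad x_{k+1}=(1-\tau_{k+1})y_{k+1}+\tau_{k+1}z_{k+1}. \] Then for $k=1,2,\dots$, \[ f(y_k)-f_\star\le\frac{2V_{x_0}(x_\star)}{L\alpha_k^2}. \]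
   Context: $\langle\cdot,\cdot\rangle$ is the standard Euclidean inner product. "$1$-strongly convex with respect to $\|\cdot\|$" means $w(y)\ge w(x)+\langle\nabla w(x),y-x\rangle+\frac12\|y-x\|^2$ for all $x,y$. *)

theory Defs
  imports "HOL-Analysis.Analysis"
begin

definition qnorm :: "real^'n^'n \<Rightarrow> real^'n \<Rightarrow> real" where
  "qnorm Q x = sqrt (x \<bullet> (Q *v x))"

definition dnorm :: "real^'n^'n \<Rightarrow> real^'n \<Rightarrow> real" where
  "dnorm Q u = sqrt (u \<bullet> (matrix_inv Q *v u))"

definition sym_pos_def_mat :: "real^'n^'n \<Rightarrow> bool" where
  "sym_pos_def_mat Q \<longleftrightarrow> transpose Q = Q \<and> (\<forall>x. x \<noteq> 0 \<longrightarrow> x \<bullet> (Q *v x) > 0)"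

definition bregman :: "(real^'n \<Rightarrow> real) \<Rightarrow> (real^'n \<Rightarrow> real^'n) \<Rightarrow> real^'n \<Rightarrow> real^'n \<Rightarrow> real" where
  "bregman w gw x y = w y - gw x \<bullet> (y - x) - w x"

end

theory Submission
  imports Defs
begin

(* The potential
     E_k = L alpha_(k+1)^2/2 * gap_k + V_(z_(k+1))(x_star),
     gap_k = f(x_k) - f_star - ||grad f(x_k)||_*^2 / (2L),
   satisfies E_0 <= V_(x_0)(x_star) and E_(k+1) <= E_k, while f(y_(k+1)) - f_star <= gap_k because the
   gradient step from x_k decreases f by at least ||grad f(x_k)||_*^2 / (2L); in particular gap_k >= 0.
   For the decrease, the mirror step bounds alpha <g, z_(k+1) - x_star>, g = grad f(x_(k+1)), by
   alpha^2/2 ||g||_*^2 + V_(z_(k+1))(x_star) - V_(z_(k+2))(x_star).  The weight tau is chosen so that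
   alpha (z_(k+1) - x_(k+1)) = (L alpha^2/2 - alpha) (x_(k+1) - y_(k+1)); with this, the lower bound
   f(u) >= f(v) + <grad f(v), u - v> + ||grad f(u) - grad f(v)||_*^2 / (2L) at u = x_star and at u = x_k
   bounds the same inner product from below by
   L alpha^2/2 gap_(k+1) - (L alpha^2/2 - alpha) gap_k + alpha^2/2 ||g||_*^2, and the step-size
   condition bounds L alpha^2/2 - alpha by L alpha_(k+1)^2/2. *)

lemma sym_pos_def_mat_inner_commute:
  assumes "sym_pos_def_mat Q"
  shows "(Q *v a) \<bullet> b = a \<bullet> (Q *v b)"
proof -
  have "Q *v a = a v* Q"
    using assms by (metis sym_pos_def_mat_def vector_transpose_matrix)
  then show ?thesis by (simp add: dot_lmul_matrix)
qed

lemma sym_pos_def_mat_nonneg: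
  assumes "sym_pos_def_mat Q"
  shows "0 \<le> a \<bullet> (Q *v a)"
  using assms unfolding sym_pos_def_mat_def by (cases "a = 0") (auto intro: less_imp_le)

lemma sym_pos_def_mat_inv_right:
  assumes "sym_pos_def_mat Q"
  shows "Q *v (matrix_inv Q *v u) = u"
proof -
  have "\<forall>x. Q *v x = 0 \<longrightarrow> x = 0"
    using assms unfolding sym_pos_def_mat_def by (metis inner_zero_right less_irrefl)
  then obtain B where "B ** Q = mat 1"
    using matrix_left_invertible_ker by blast
  then have "invertible Q"
    using invertible_left_inverse by blast
  then have "Q ** matrix_inv Q = mat 1"
    unfolding invertible_def matrix_inv_def by (rule someI2_ex) auto
  then show ?thesis by (simp add: matrix_vector_mul_assoc)
qed

definition dual_inner :: "real^'n^'n \<Rightarrow> real^'n \<Rightarrow> real^'n \<Rightarrow> real" where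
  "dual_inner Q u v = u \<bullet> (matrix_inv Q *v v)"

lemma dual_inner_commute:
  assumes "sym_pos_def_mat Q"
  shows "dual_inner Q u v = dual_inner Q v u"
proof -
  let ?a = "matrix_inv Q *v u" and ?b = "matrix_inv Q *v v"
  have "u \<bullet> ?b = (Q *v ?a) \<bullet> ?b"
    using sym_pos_def_mat_inv_right[OF assms] by simp
  also have "\<dots> = ?a \<bullet> (Q *v ?b)"
    by (rule sym_pos_def_mat_inner_commute[OF assms])
  also have "\<dots> = v \<bullet> ?a"
    using sym_pos_def_mat_inv_right[OF assms] by (simp add: inner_commute)
  finally show ?thesis by (simp add: dual_inner_def)
qed

lemma dual_inner_self_nonneg:
  assumes "sym_pos_def_mat Q"
  shows "0 \<le> dual_inner Q u u"
proof -
  let ?a = "matrix_inv Q *v u"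
  have "dual_inner Q u u = ?a \<bullet> (Q *v ?a)"
    using sym_pos_def_mat_inv_right[OF assms] by (simp add: dual_inner_def inner_commute)
  then show ?thesis using sym_pos_def_mat_nonneg[OF assms] by simp
qed

lemma power2_qnorm:
  assumes "sym_pos_def_mat Q"
  shows "(qnorm Q d)\<^sup>2 = d \<bullet> (Q *v d)"
  using sym_pos_def_mat_nonneg[OF assms] by (simp add: qnorm_def)

lemma power2_qnorm_matrix_inv:
  assumes "sym_pos_def_mat Q"
  shows "(qnorm Q (matrix_inv Q *v u))\<^sup>2 = dual_inner Q u u"
  using sym_pos_def_mat_inv_right[OF assms] dual_inner_self_nonneg[OF assms, of u]
  by (simp add: qnorm_def dual_inner_def inner_commute)

lemma power2_dnorm:
  assumes "sym_pos_def_mat Q"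
  shows "(dnorm Q u)\<^sup>2 = dual_inner Q u u"
  using dual_inner_self_nonneg[OF assms, of u] by (simp add: dnorm_def dual_inner_def)

lemma dnorm_nonneg:
  assumes "sym_pos_def_mat Q"
  shows "0 \<le> dnorm Q u"
  using dual_inner_self_nonneg[OF assms] by (simp add: dnorm_def dual_inner_def)

lemma dnorm_minus: "dnorm Q (- u) = dnorm Q u"
  using matrix_vector_mult_diff_distrib[of "matrix_inv Q" 0 u] by (simp add: dnorm_def)

lemma qnorm_scaleR: "qnorm Q (c *\<^sub>R d) = \<bar>c\<bar> * qnorm Q d"
proof -
  have "qnorm Q (c *\<^sub>R d) = sqrt ((c * c) * (d \<bullet> (Q *v d)))"
    by (simp add: qnorm_def matrix_vector_mult_scaleR mult.assoc)
  then show ?thesis by (simp add: qnorm_def real_sqrt_mult)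
qed

lemma qnorm_minus_commute: "qnorm Q (u - v) = qnorm Q (v - u)"
  using qnorm_scaleR[of Q "-1" "u - v"] by simp

lemma power2_dnorm_diff:
  assumes "sym_pos_def_mat Q"
  shows "(dnorm Q (u - v))\<^sup>2 = (dnorm Q u)\<^sup>2 - 2 * dual_inner Q u v + (dnorm Q v)\<^sup>2"
  using dual_inner_commute[OF assms, of u v]
  by (simp add: power2_dnorm[OF assms] dual_inner_def matrix_vector_mult_diff_distrib
      inner_diff_left inner_diff_right)

lemma young_inequality_qnorm_dnorm:
  assumes "sym_pos_def_mat Q"
  shows "2 * l * (e \<bullet> d) \<le> (qnorm Q d)\<^sup>2 + l\<^sup>2 * (dnorm Q e)\<^sup>2"
proof -
  let ?v = "matrix_inv Q *v e"
  have Qv: "Q *v ?v = e" by (rule sym_pos_def_mat_inv_right[OF assms])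
  have "0 \<le> (qnorm Q (d - l *\<^sub>R ?v))\<^sup>2" by simp
  also have "\<dots> = (d - l *\<^sub>R ?v) \<bullet> (Q *v d - l *\<^sub>R e)"
    using Qv
    by (simp add: power2_qnorm[OF assms] matrix_vector_mult_diff_distrib matrix_vector_mult_scaleR)
  also have "\<dots> = d \<bullet> (Q *v d) - 2 * l * (e \<bullet> d) + l\<^sup>2 * dual_inner Q e e"
    using sym_pos_def_mat_inner_commute[OF assms, of ?v d] Qv
    by (simp add: dual_inner_def inner_diff_left inner_diff_right algebra_simps
        power2_eq_square inner_commute)
  also have "\<dots> = (qnorm Q d)\<^sup>2 - 2 * l * (e \<bullet> d) + l\<^sup>2 * (dnorm Q e)\<^sup>2"
    by (simp add: power2_qnorm[OF assms] power2_dnorm[OF assms])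
  finally show ?thesis by simp
qed

lemma inner_le_of_dnorm_le:
  assumes Q: "sym_pos_def_mat Q" and c: "c > 0"
    and le: "dnorm Q e \<le> c * qnorm Q d"
  shows "e \<bullet> d \<le> c * (qnorm Q d)\<^sup>2"
proof -
  have "(dnorm Q e)\<^sup>2 \<le> (c * qnorm Q d)\<^sup>2"
    using le dnorm_nonneg[OF Q] by (intro power_mono) simp_all
  then have "(1/c)\<^sup>2 * (dnorm Q e)\<^sup>2 \<le> (qnorm Q d)\<^sup>2"
    using c by (simp add: field_simps power2_eq_square)
  with young_inequality_qnorm_dnorm[OF Q, of "1/c" e d]
  have "2 * (1/c) * (e \<bullet> d) \<le> 2 * (qnorm Q d)\<^sup>2"
    by linarith
  then show ?thesis using c by (simp add: field_simps)
qed

lemma smooth_upper_bound: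
  assumes Q: "sym_pos_def_mat Q" and L: "L > 0"
    and h_grad: "\<And>u. (h has_derivative (\<lambda>v. gh u \<bullet> v)) (at u)"
    and gh_lip: "\<And>u v. dnorm Q (gh u - gh v) \<le> L * qnorm Q (u - v)"
  shows "h (x + d) \<le> h x + gh x \<bullet> d + L/2 * (qnorm Q d)\<^sup>2"
proof -
  define \<psi> where "\<psi> t = h (x + t *\<^sub>R d) - t * (gh x \<bullet> d) - L/2 * t\<^sup>2 * (qnorm Q d)\<^sup>2" for t
  have \<psi>_deriv: "DERIV \<psi> t :> (gh (x + t *\<^sub>R d) - gh x) \<bullet> d - L * t * (qnorm Q d)\<^sup>2" for t
  proof -
    have "((\<lambda>t. x + t *\<^sub>R d) has_derivative (\<lambda>s. s *\<^sub>R d)) (at t)"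
      by (auto intro!: derivative_eq_intros)
    from has_derivative_compose[OF this h_grad]
    have "DERIV (\<lambda>t. h (x + t *\<^sub>R d)) t :> gh (x + t *\<^sub>R d) \<bullet> d"
      by (intro has_derivative_imp_has_field_derivative) auto
    then show ?thesis unfolding \<psi>_def
      by (auto intro!: derivative_eq_intros simp: power2_eq_square algebra_simps inner_diff_left)
  qed
  have "(gh (x + t *\<^sub>R d) - gh x) \<bullet> d \<le> L * t * (qnorm Q d)\<^sup>2" if "0 < t" for t
    using inner_le_of_dnorm_le[OF Q, of "L * t"] gh_lip[of "x + t *\<^sub>R d" x] that L
    by (simp add: qnorm_scaleR)
  then have "\<psi> 1 \<le> \<psi> 0"
    using \<psi>_deriv by (intro DERIV_nonpos_imp_nonincreasing[of 0 1]) (force simp: le_less)+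
  then show ?thesis by (simp add: \<psi>_def)
qed

lemma gradient_step_decrease:
  assumes Q: "sym_pos_def_mat Q" and L: "L > 0"
    and h_grad: "\<And>u. (h has_derivative (\<lambda>v. gh u \<bullet> v)) (at u)"
    and gh_lip: "\<And>u v. dnorm Q (gh u - gh v) \<le> L * qnorm Q (u - v)"
  shows "h (x - (1/L) *\<^sub>R (matrix_inv Q *v gh x)) \<le> h x - (dnorm Q (gh x))\<^sup>2 / (2*L)"
proof -
  define d where "d = (- 1/L) *\<^sub>R (matrix_inv Q *v gh x)"
  have inner_d: "gh x \<bullet> d = - (dnorm Q (gh x))\<^sup>2 / L"
    by (simp add: d_def power2_dnorm[OF Q] dual_inner_def)
  have qnorm_d: "(qnorm Q d)\<^sup>2 = (dnorm Q (gh x))\<^sup>2 / L\<^sup>2"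
    unfolding d_def qnorm_scaleR
    by (simp add: power_mult_distrib power2_qnorm_matrix_inv[OF Q] power2_dnorm[OF Q] power_divide)
  have "h (x + d) \<le> h x + gh x \<bullet> d + L/2 * (qnorm Q d)\<^sup>2"
    by (rule smooth_upper_bound[OF Q L h_grad gh_lip])
  also have "\<dots> = h x - (dnorm Q (gh x))\<^sup>2 / (2*L)"
    unfolding inner_d qnorm_d using L by (simp add: field_simps power2_eq_square)
  finally show ?thesis by (simp add: d_def)
qed

lemma convex_on_gradient_inequality:
  fixes f :: "'a::real_normed_vector \<Rightarrow> real"
  assumes f_convex: "convex_on UNIV f" and f_deriv: "(f has_derivative D) (at x)"
  shows "f x + D (y - x) \<le> f y"
proof -
  define \<phi> where "\<phi> t = f (x + t *\<^sub>R (y - x))" for t :: real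
  have "convex_on UNIV \<phi>"
  proof (rule convex_onI)
    fix t a b :: real assume t: "0 < t" "t < 1"
    have "x + ((1 - t) *\<^sub>R a + t *\<^sub>R b) *\<^sub>R (y - x)
        = (1 - t) *\<^sub>R (x + a *\<^sub>R (y - x)) + t *\<^sub>R (x + b *\<^sub>R (y - x))"
      by (simp add: algebra_simps)
    then show "\<phi> ((1 - t) *\<^sub>R a + t *\<^sub>R b) \<le> (1 - t) * \<phi> a + t * \<phi> b"
      unfolding \<phi>_def using convex_onD[OF f_convex, of t] t by simp
  qed simp
  moreover have "DERIV \<phi> 0 :> D (y - x)"
  proof -
    have "((\<lambda>t. x + t *\<^sub>R (y - x)) has_derivative (\<lambda>s. s *\<^sub>R (y - x))) (at 0)"
      by (auto intro!: derivative_eq_intros)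
    from has_derivative_compose[OF this] f_deriv
    have "(\<phi> has_derivative (\<lambda>s. D (s *\<^sub>R (y - x)))) (at 0)"
      unfolding \<phi>_def by simp
    moreover have "D (s *\<^sub>R (y - x)) = s * D (y - x)" for s
      using linear_scale[OF has_derivative_linear[OF f_deriv]] by simp
    ultimately show ?thesis
      by (intro has_derivative_imp_has_field_derivative) (auto simp: mult.commute)
  qed
  ultimately have "\<phi> 1 - \<phi> 0 \<ge> D (y - x) * (1 - 0)"
    by (intro convex_on_imp_above_tangent) auto
  then show ?thesis by (simp add: \<phi>_def)
qed

lemma smooth_convex_lower_bound:
  assumes Q: "sym_pos_def_mat Q" and L: "L > 0" and f_convex: "convex_on UNIV f"
    and f_grad: "\<And>u. (f has_derivative (\<lambda>v. gf u \<bullet> v)) (at u)"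
    and gf_lip: "\<And>u v. dnorm Q (gf u - gf v) \<le> L * qnorm Q (u - v)"
  shows "f q + gf q \<bullet> (p - q) + (dnorm Q (gf p - gf q))\<^sup>2 / (2*L) \<le> f p"
proof -
  define \<phi> where "\<phi> u = f u - gf q \<bullet> u" for u
  define g\<phi> where "g\<phi> u = gf u - gf q" for u
  have \<phi>_grad: "(\<phi> has_derivative (\<lambda>v. g\<phi> u \<bullet> v)) (at u)" for u
    unfolding \<phi>_def g\<phi>_def using f_grad[of u]
    by (auto intro!: derivative_eq_intros simp: inner_diff_left)
  have g\<phi>_lip: "dnorm Q (g\<phi> u - g\<phi> v) \<le> L * qnorm Q (u - v)" for u v
    unfolding g\<phi>_def using gf_lip[of u v] by simp
  have \<phi>_min: "\<phi> q \<le> \<phi> u" for u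
    using convex_on_gradient_inequality[OF f_convex f_grad, of q u]
    by (simp add: \<phi>_def inner_diff_right)
  \<comment> \<open>\<open>q\<close> minimizes the tilted function \<open>\<phi>\<close>, so \<open>\<phi> q\<close> is below the value after a gradient step from \<open>p\<close>\<close>
  have "\<phi> q \<le> \<phi> (p - (1/L) *\<^sub>R (matrix_inv Q *v g\<phi> p))"
    by (rule \<phi>_min)
  also have "\<dots> \<le> \<phi> p - (dnorm Q (g\<phi> p))\<^sup>2 / (2*L)"
    by (rule gradient_step_decrease[OF Q L \<phi>_grad g\<phi>_lip])
  finally show ?thesis by (simp add: \<phi>_def g\<phi>_def inner_diff_right)
qed

lemma gradient_zero_at_minimum:
  fixes f :: "'a::real_inner \<Rightarrow> real"
  assumes "(f has_derivative (\<lambda>v. g \<bullet> v)) (at x)" and "\<And>u. f x \<le> f u"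
  shows "g = 0"
proof -
  have "(\<lambda>v. g \<bullet> v) = (\<lambda>v. 0)"
    using assms by (intro differential_zero_maxmin[of x UNIV]) auto
  then have "g \<bullet> g = 0" by metis
  then show ?thesis by simp
qed

lemma bregman_three_point:
  "bregman w gw z u - bregman w gw z' u - bregman w gw z z' = (gw z' - gw z) \<bullet> (u - z')"
  by (simp add: bregman_def algebra_simps inner_diff_left inner_diff_right)

lemma mirror_step_inequality:
  assumes Q: "sym_pos_def_mat Q"
    and w_grad: "\<And>u. (w has_derivative (\<lambda>v. gw u \<bullet> v)) (at u)"
    and w_sc: "\<And>u v. w v \<ge> w u + gw u \<bullet> (v - u) + 1/2 * (qnorm Q (v - u))\<^sup>2"
    and z'_min: "\<And>u. bregman w gw z z' + a * (g \<bullet> (z' - x)) \<le> bregman w gw z u + a * (g \<bullet> (u - x))"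
  shows "a * (g \<bullet> (z - u)) \<le> a\<^sup>2/2 * (dnorm Q g)\<^sup>2 + bregman w gw z u - bregman w gw z' u"
proof -
  have "((\<lambda>u. bregman w gw z u + a * (g \<bullet> (u - x))) has_derivative
      (\<lambda>v. (gw z' - gw z + a *\<^sub>R g) \<bullet> v)) (at z')"
    unfolding bregman_def using w_grad[of z']
    by (auto intro!: derivative_eq_intros simp: inner_diff_right inner_diff_left inner_add_left)
  then have "gw z' - gw z + a *\<^sub>R g = 0"
    using z'_min by (rule gradient_zero_at_minimum)
  then have gw_jump: "gw z' - gw z = - a *\<^sub>R g"
    by (simp add: eq_neg_iff_add_eq_0)
  have "bregman w gw z u - bregman w gw z' u - bregman w gw z z' = a * (g \<bullet> (z' - u))"
    unfolding bregman_three_point gw_jump by (simp add: inner_diff_right algebra_simps)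
  moreover have "1/2 * (qnorm Q (z - z'))\<^sup>2 \<le> bregman w gw z z'"
    using w_sc[of z z'] by (simp add: bregman_def qnorm_minus_commute)
  moreover have "2 * a * (g \<bullet> (z - z')) \<le> (qnorm Q (z - z'))\<^sup>2 + a\<^sup>2 * (dnorm Q g)\<^sup>2"
    by (rule young_inequality_qnorm_dnorm[OF Q])
  moreover have "g \<bullet> (z - u) = g \<bullet> (z - z') + g \<bullet> (z' - u)"
    by (simp add: inner_diff_right)
  ultimately show ?thesis by (simp add: algebra_simps)
qed

locale linear_coupling =
  fixes Q :: "real^'n^'n"
    and f w :: "real^'n \<Rightarrow> real"
    and gf gw :: "real^'n \<Rightarrow> real^'n"
    and L :: real
    and xs :: "real^'n"
    and \<alpha> :: "nat \<Rightarrow> real"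
    and x y z :: "nat \<Rightarrow> real^'n"
  assumes Q: "sym_pos_def_mat Q"
    and L_pos: "L > 0"
    and f_convex: "convex_on UNIV f"
    and f_grad: "\<And>u. (f has_derivative (\<lambda>h. gf u \<bullet> h)) (at u)"
    and f_lip: "\<And>u v. dnorm Q (gf u - gf v) \<le> L * qnorm Q (u - v)"
    and xs_min: "\<And>u. f xs \<le> f u"
    and w_grad: "\<And>u. (w has_derivative (\<lambda>h. gw u \<bullet> h)) (at u)"
    and w_sc: "\<And>u v. w v \<ge> w u + gw u \<bullet> (v - u) + 1/2 * (qnorm Q (v - u))\<^sup>2"
    and \<alpha>_pos: "\<And>k. k \<ge> 1 \<Longrightarrow> \<alpha> k > 0"
    and \<alpha>1: "\<alpha> 1 = 2 / L"
    and \<alpha>_rec: "\<And>k. k \<ge> 1 \<Longrightarrow>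
        0 \<le> (\<alpha> (k+1))\<^sup>2 * L - 2 * \<alpha> (k+1) \<and> (\<alpha> (k+1))\<^sup>2 * L - 2 * \<alpha> (k+1) \<le> (\<alpha> k)\<^sup>2 * L"
    and z0: "z 0 = x 0"
    and y_step: "\<And>k. y (k+1) = x k - (1/L) *\<^sub>R (matrix_inv Q *v gf (x k))"
    and z_step: "\<And>k u. bregman w gw (z k) (z (k+1)) + \<alpha> (k+1) * (gf (x k) \<bullet> (z (k+1) - x k))
                     \<le> bregman w gw (z k) u + \<alpha> (k+1) * (gf (x k) \<bullet> (u - x k))"
    and x_step: "\<And>k. x (k+1) = (1 - 2 / (\<alpha> (k+2) * L)) *\<^sub>R y (k+1) + (2 / (\<alpha> (k+2) * L)) *\<^sub>R z (k+1)"
begin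

definition gap :: "nat \<Rightarrow> real" where
  "gap k = f (x k) - f xs - (dnorm Q (gf (x k)))\<^sup>2 / (2*L)"

definition potential :: "nat \<Rightarrow> real" where
  "potential k = L * (\<alpha> (k+1))\<^sup>2 / 2 * gap k + bregman w gw (z (k+1)) xs"

lemma gf_xs_eq_0: "gf xs = 0"
  using f_grad xs_min by (rule gradient_zero_at_minimum)

lemma f_y_le_gap: "f (y (k+1)) - f xs \<le> gap k"
  unfolding gap_def y_step using gradient_step_decrease[OF Q L_pos f_grad f_lip, of "x k"] by simp

lemma gap_nonneg: "0 \<le> gap k"
  using f_y_le_gap[of k] xs_min[of "y (k+1)"] by simp

lemma bregman_nonneg: "0 \<le> bregman w gw u v"
proof -
  have "0 \<le> 1/2 * (qnorm Q (v - u))\<^sup>2" by simp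
  then show ?thesis using w_sc[of u v] unfolding bregman_def by linarith
qed

lemma mirror_step_bound: "\<alpha> (k+1) * (gf (x k) \<bullet> (z k - xs))
    \<le> (\<alpha> (k+1))\<^sup>2/2 * (dnorm Q (gf (x k)))\<^sup>2 + bregman w gw (z k) xs - bregman w gw (z (k+1)) xs"
  by (rule mirror_step_inequality[OF Q w_grad w_sc z_step])

lemma f_lower_bound_at_xs:
  "f (x k) - gf (x k) \<bullet> (x k - xs) + (dnorm Q (gf (x k)))\<^sup>2 / (2*L) \<le> f xs"
  using smooth_convex_lower_bound[OF Q L_pos f_convex f_grad f_lip, of "x k" xs]
  by (simp add: gf_xs_eq_0 dnorm_minus inner_diff_right)

lemma coupling_identity:
  fixes m defines "a \<equiv> \<alpha> (m+2)"
  shows "a *\<^sub>R (z (m+1) - x (m+1)) = (L * a\<^sup>2/2 - a) *\<^sub>R (x (m+1) - y (m+1))"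
proof -
  define \<tau> where "\<tau> = 2 / (a * L)"
  have "a > 0" using \<alpha>_pos[of "m+2"] by (simp add: a_def)
  then have weights: "a * (1 - \<tau>) = (L * a\<^sup>2/2 - a) * \<tau>"
    using L_pos by (simp add: \<tau>_def field_simps power2_eq_square)
  have x_convex: "x (m+1) = (1 - \<tau>) *\<^sub>R y (m+1) + \<tau> *\<^sub>R z (m+1)"
    using x_step[of m] by (simp add: \<tau>_def a_def)
  have "a *\<^sub>R (z (m+1) - x (m+1)) = (a * (1 - \<tau>)) *\<^sub>R (z (m+1) - y (m+1))"
    unfolding x_convex by (simp add: algebra_simps)
  also have "\<dots> = (L * a\<^sup>2/2 - a) *\<^sub>R (\<tau> *\<^sub>R (z (m+1) - y (m+1)))"
    unfolding weights by simp
  also have "\<tau> *\<^sub>R (z (m+1) - y (m+1)) = x (m+1) - y (m+1)"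
    unfolding x_convex by (simp add: algebra_simps)
  finally show ?thesis .
qed

lemma inner_coupling_identity:
  fixes m defines "a \<equiv> \<alpha> (m+2)" and "g \<equiv> gf (x (m+1))"
  shows "a * (g \<bullet> (z (m+1) - x (m+1)))
    = (L * a\<^sup>2/2 - a) * (g \<bullet> (x (m+1) - x m) + dual_inner Q (gf (x m)) g / L)"
proof -
  have "a * (g \<bullet> (z (m+1) - x (m+1))) = (L * a\<^sup>2/2 - a) * (g \<bullet> (x (m+1) - y (m+1)))"
    using arg_cong[OF coupling_identity[of m], of "\<lambda>v. g \<bullet> v"] by (simp add: a_def)
  also have "g \<bullet> (x (m+1) - y (m+1)) = g \<bullet> (x (m+1) - x m) + dual_inner Q (gf (x m)) g / L"
    unfolding y_step using dual_inner_commute[OF Q, of g "gf (x m)"]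
    by (simp add: dual_inner_def inner_diff_right algebra_simps)
  finally show ?thesis .
qed

lemma f_lower_bound_at_prev:
  fixes m defines "g \<equiv> gf (x (m+1))" and "g' \<equiv> gf (x m)"
  shows "f (x (m+1)) - f (x m) + ((dnorm Q g')\<^sup>2 + (dnorm Q g)\<^sup>2) / (2*L)
    \<le> g \<bullet> (x (m+1) - x m) + dual_inner Q g' g / L"
proof -
  have "f (x (m+1)) - g \<bullet> (x (m+1) - x m) + (dnorm Q (g' - g))\<^sup>2 / (2*L) \<le> f (x m)"
    using smooth_convex_lower_bound[OF Q L_pos f_convex f_grad f_lip, of "x (m+1)" "x m"]
    by (simp add: g_def g'_def inner_diff_right)
  moreover have "(dnorm Q (g' - g))\<^sup>2 / (2*L)
      = ((dnorm Q g')\<^sup>2 + (dnorm Q g)\<^sup>2) / (2*L) - dual_inner Q g' g / L"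
    using L_pos by (simp add: power2_dnorm_diff[OF Q] field_simps)
  ultimately show ?thesis by linarith
qed

lemma gap_step_lower_bound:
  fixes m defines "a \<equiv> \<alpha> (m+2)" and "g \<equiv> gf (x (m+1))"
  shows "L * a\<^sup>2/2 * gap (m+1) - (L * a\<^sup>2/2 - a) * gap m + a\<^sup>2/2 * (dnorm Q g)\<^sup>2
    \<le> a * (g \<bullet> (z (m+1) - xs))"
proof -
  define c where "c = L * a\<^sup>2/2 - a"
  define g' where "g' = gf (x m)"
  have "a > 0"
    using \<alpha>_pos[of "m+2"] by (simp add: a_def)
  have "c \<ge> 0"
    using \<alpha>_rec[of "m+1"] by (simp add: c_def a_def algebra_simps)
  have "L * a\<^sup>2/2 * gap (m+1) - c * gap m + a\<^sup>2/2 * (dnorm Q g)\<^sup>2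
      = a * (f (x (m+1)) - f xs + (dnorm Q g)\<^sup>2 / (2*L))
        + c * (f (x (m+1)) - f (x m) + ((dnorm Q g')\<^sup>2 + (dnorm Q g)\<^sup>2) / (2*L))"
    using L_pos by (simp add: gap_def c_def g_def g'_def field_simps power2_eq_square)
  also have "\<dots> \<le> a * (g \<bullet> (x (m+1) - xs)) + c * (g \<bullet> (x (m+1) - x m) + dual_inner Q g' g / L)"
    using f_lower_bound_at_xs[of "m+1"] f_lower_bound_at_prev[of m] \<open>a > 0\<close> \<open>c \<ge> 0\<close>
    by (intro add_mono[OF mult_left_mono mult_left_mono]) (simp_all add: g_def g'_def)
  also have "\<dots> = a * (g \<bullet> (z (m+1) - xs))"
    using inner_coupling_identity[of m]
    by (simp add: a_def c_def g_def g'_def inner_diff_right algebra_simps)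
  finally show ?thesis by (simp add: c_def)
qed

lemma gap_base_lower_bound:
  "L * (\<alpha> 1)\<^sup>2/2 * gap 0 + (\<alpha> 1)\<^sup>2/2 * (dnorm Q (gf (x 0)))\<^sup>2 \<le> \<alpha> 1 * (gf (x 0) \<bullet> (z 0 - xs))"
proof -
  have "L * (\<alpha> 1)\<^sup>2/2 * gap 0 + (\<alpha> 1)\<^sup>2/2 * (dnorm Q (gf (x 0)))\<^sup>2
      = \<alpha> 1 * (f (x 0) - f xs + (dnorm Q (gf (x 0)))\<^sup>2 / (2*L))"
    unfolding \<alpha>1 gap_def using L_pos by (simp add: field_simps power2_eq_square)
  also have "\<dots> \<le> \<alpha> 1 * (gf (x 0) \<bullet> (z 0 - xs))"
    using f_lower_bound_at_xs[of 0] \<alpha>_pos[of 1] by (intro mult_left_mono) (simp_all add: z0)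
  finally show ?thesis .
qed

lemma potential_0_le: "potential 0 \<le> bregman w gw (x 0) xs"
  using gap_base_lower_bound mirror_step_bound[of 0] by (simp add: potential_def z0)

lemma potential_Suc_le: "potential (m+1) \<le> potential m"
proof -
  have "(L * (\<alpha> (m+2))\<^sup>2/2 - \<alpha> (m+2)) * gap m \<le> L * (\<alpha> (m+1))\<^sup>2/2 * gap m"
    using \<alpha>_rec[of "m+1"] gap_nonneg[of m] by (intro mult_right_mono) (simp_all add: algebra_simps)
  then show ?thesis
    using gap_step_lower_bound[of m] mirror_step_bound[of "m+1"] by (simp add: potential_def)
qed

lemma potential_le: "potential k \<le> bregman w gw (x 0) xs"
proof (induction k)
  case 0
  show ?case by (rule potential_0_le)
next
  case (Suc k)
  then show ?case using potential_Suc_le[of k] by simp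
qed

lemma convergence_rate:
  assumes "k \<ge> 1"
  shows "f (y k) - f xs \<le> 2 * bregman w gw (x 0) xs / (L * (\<alpha> k)\<^sup>2)"
proof -
  obtain m where k: "k = m + 1"
    using assms by (metis add.commute le_Suc_ex)
  have "L * (\<alpha> k)\<^sup>2 > 0"
    using L_pos \<alpha>_pos[OF assms] by simp
  moreover have "L * (\<alpha> k)\<^sup>2/2 * (f (y k) - f xs) \<le> L * (\<alpha> k)\<^sup>2/2 * gap m"
    using f_y_le_gap[of m] L_pos by (intro mult_left_mono) (simp_all add: k)
  moreover have "L * (\<alpha> k)\<^sup>2/2 * gap m \<le> bregman w gw (x 0) xs"
    using potential_le[of m] bregman_nonneg[of "z k" xs] by (simp add: potential_def k)
  ultimately show ?thesis
    by (simp add: pos_le_divide_eq mult.commute)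
qed

end

theorem theorem5:
  fixes Q :: "real^'n^'n"
    and f w :: "real^'n \<Rightarrow> real"
    and gf gw :: "real^'n \<Rightarrow> real^'n"
    and L :: real
    and xs :: "real^'n"
    and \<alpha> :: "nat \<Rightarrow> real"
    and x y z :: "nat \<Rightarrow> real^'n"
  assumes Q: "sym_pos_def_mat Q"
    and L_pos: "L > 0"
    and f_convex: "convex_on UNIV f"
    and f_grad: "\<And>u. (f has_derivative (\<lambda>h. gf u \<bullet> h)) (at u)"
    and f_lip: "\<And>u v. dnorm Q (gf u - gf v) \<le> L * qnorm Q (u - v)"
    and xs_min: "\<And>u. f xs \<le> f u"
    and w_grad: "\<And>u. (w has_derivative (\<lambda>h. gw u \<bullet> h)) (at u)"
    and w_sc: "\<And>u v. w v \<ge> w u + gw u \<bullet> (v - u) + 1/2 * (qnorm Q (v - u))\<^sup>2"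
    and \<alpha>_pos: "\<And>k. k \<ge> 1 \<Longrightarrow> \<alpha> k > 0"
    and \<alpha>1: "\<alpha> 1 = 2 / L"
    and \<alpha>_rec: "\<And>k. k \<ge> 1 \<Longrightarrow>
        0 \<le> (\<alpha> (k+1))\<^sup>2 * L - 2 * \<alpha> (k+1) \<and> (\<alpha> (k+1))\<^sup>2 * L - 2 * \<alpha> (k+1) \<le> (\<alpha> k)\<^sup>2 * L"
    and z0: "z 0 = x 0"
    and y_step: "\<And>k. y (k+1) = x k - (1/L) *\<^sub>R (matrix_inv Q *v gf (x k))"
    and z_step: "\<And>k u. bregman w gw (z k) (z (k+1)) + \<alpha> (k+1) * (gf (x k) \<bullet> (z (k+1) - x k))
                     \<le> bregman w gw (z k) u + \<alpha> (k+1) * (gf (x k) \<bullet> (u - x k))"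
    and x_step: "\<And>k. x (k+1) = (1 - 2 / (\<alpha> (k+2) * L)) *\<^sub>R y (k+1) + (2 / (\<alpha> (k+2) * L)) *\<^sub>R z (k+1)"
  shows "\<forall>k\<ge>1. f (y k) - f xs \<le> 2 * bregman w gw (x 0) xs / (L * (\<alpha> k)\<^sup>2)"
proof -
  interpret linear_coupling Q f w gf gw L xs \<alpha> x y z
    by (rule linear_coupling.intro[OF assms])
  show ?thesis
    using convergence_rate by blast
qed

end
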